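(* Let $\Phi$ be a channel matrix whose rows $P^1,\dots,P^4\in\Delta^n$ are in general position, let $Q^0$ be the equidistant point from $P^1,\dots,P^4$ and $\boldsymbol\lambda^0$ its barycentric coordinate. If $\lambda^0_i\ge0$ for $i=1,\dots,4$, then the output distribution achieving the channel capacity is $Q^\ast=Q^0$ and the channel capacity is $C=D(P^1\|Q^0)$.
   Context: $\Delta^n=\{Q:Q_j>0,\sum_jQ_j=1\}$, $\bar\Delta^m=\{\boldsymbol\lambda:\lambda_i\ge0,\sum_i\lambda_i=1\}$; $D(Q\|Q')=\sum_jQ_j\log(Q_j/Q'_j)$. Rows are in general position if $P^2-P^1,\dots,P^m-P^1$ are linearly independent. $L(S^1,\dots,S^r)=\{\sum_i\lambda_iS^i:\sum_i\lambda_i=1\}\cap\Delta^n$. The barycentric coordinate of $Q\in L(P^1,\dots,P^m)$ is the unique $\boldsymbol\lambda$ with $\sum_i\lambda_i=1$, $Q=\sum_i\lambda_iP^i$. The equidistant point is the unique $Q^0\in L(P^1,\dots,P^m)$ with all $D(P^i\|Q^0)$ equal. Mutual information $I(\boldsymbol\lambda,\Phi)=\sum_{i,j}\lambda_iP^i_j\log(P^i_j/Q_j)$ with $Q=\boldsymbol\lambda\Phi$; capacity $C=\max_{\boldsymbol\lambda\in\bar\Delta^m}I(\boldsymbol\lambda,\Phi)$; the capacity-achieving output distribution is $Q^\ast=\boldsymbol\lambda^\ast\Phi$ for a maximizer $\boldsymbol\lambda^\ast$ (unique). *)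

theory Defs
  imports "HOL-Analysis.Analysis"
begin

text \<open>Distributions on the output alphabet {0..<n} are functions nat => real;
 only the values at j < n matter. Rows of a channel matrix with m inputs are
 P i for i < m.\<close>

definition open_simplex :: "nat \<Rightarrow> (nat \<Rightarrow> real) \<Rightarrow> bool" where
  "open_simplex n Q \<longleftrightarrow> (\<forall>j<n. Q j > 0) \<and> (\<Sum>j<n. Q j) = 1"

definition closed_simplex :: "nat \<Rightarrow> (nat \<Rightarrow> real) set" where
  "closed_simplex m = {lam. (\<forall>i<m. lam i \<ge> 0) \<and> (\<Sum>i<m. lam i) = 1}"

definition KL :: "nat \<Rightarrow> (nat \<Rightarrow> real) \<Rightarrow> (nat \<Rightarrow> real) \<Rightarrow> real" where
  "KL n Q Q' = (\<Sum>j<n. Q j * ln (Q j / Q' j))"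

definition out_dist :: "nat \<Rightarrow> (nat \<Rightarrow> nat \<Rightarrow> real) \<Rightarrow> (nat \<Rightarrow> real) \<Rightarrow> (nat \<Rightarrow> real)" where
  "out_dist m P lam = (\<lambda>j. \<Sum>i<m. lam i * P i j)"

text \<open>P^2-P^1, ..., P^m-P^1 linearly independent (rows indexed 0..m-1).\<close>
definition general_position :: "nat \<Rightarrow> nat \<Rightarrow> (nat \<Rightarrow> nat \<Rightarrow> real) \<Rightarrow> bool" where
  "general_position n m P \<longleftrightarrow>
     (\<forall>c. (\<forall>j<n. (\<Sum>i\<in>{1..<m}. c i * (P i j - P 0 j)) = 0) \<longrightarrow> (\<forall>i\<in>{1..<m}. c i = 0))"

definition barycentric :: "nat \<Rightarrow> nat \<Rightarrow> (nat \<Rightarrow> nat \<Rightarrow> real) \<Rightarrow> (nat \<Rightarrow> real) \<Rightarrow> (nat \<Rightarrow> real) \<Rightarrow> bool" where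
  "barycentric n m P Q lam \<longleftrightarrow> (\<Sum>i<m. lam i) = 1 \<and> (\<forall>j<n. Q j = out_dist m P lam j)"

definition in_L :: "nat \<Rightarrow> nat \<Rightarrow> (nat \<Rightarrow> nat \<Rightarrow> real) \<Rightarrow> (nat \<Rightarrow> real) \<Rightarrow> bool" where
  "in_L n m P Q \<longleftrightarrow> open_simplex n Q \<and> (\<exists>lam. barycentric n m P Q lam)"

definition equidistant :: "nat \<Rightarrow> nat \<Rightarrow> (nat \<Rightarrow> nat \<Rightarrow> real) \<Rightarrow> (nat \<Rightarrow> real) \<Rightarrow> bool" where
  "equidistant n m P Q \<longleftrightarrow> in_L n m P Q \<and> (\<forall>i<m. KL n (P i) Q = KL n (P 0) Q)"

definition mutual_info :: "nat \<Rightarrow> nat \<Rightarrow> (nat \<Rightarrow> nat \<Rightarrow> real) \<Rightarrow> (nat \<Rightarrow> real) \<Rightarrow> real" where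
  "mutual_info n m P lam =
     (\<Sum>i<m. \<Sum>j<n. lam i * P i j * ln (P i j / out_dist m P lam j))"

definition capacity :: "nat \<Rightarrow> nat \<Rightarrow> (nat \<Rightarrow> nat \<Rightarrow> real) \<Rightarrow> real" where
  "capacity n m P = (SUP lam \<in> closed_simplex m. mutual_info n m P lam)"

end

theory Submission
  imports Defs
begin

text \<open>For any output distribution Q with positive entries, the mutual information splits as
  I(lam) = (\<Sum>i. lam i * D(P i \<parallel> Q)) - D(lam Phi \<parallel> Q).  Taking Q = Q0, the first term is the
  common divergence d = D(P 0 \<parallel> Q0) of the rows from Q0, so I(lam) \<le> d by Gibbs' inequality,
  with equality exactly when lam Phi = Q0.  Equality is attained at the barycentric coordinate
  lam0 of Q0, which is admissible because it is nonnegative; hence C = d and Q* = Q0.\<close>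

lemma Gibbs_inequality:
  fixes Q Q' :: "nat \<Rightarrow> real"
  assumes pos: "\<forall>j<n. Q j > 0" "\<forall>j<n. Q' j > 0"
    and sum_eq: "(\<Sum>j<n. Q' j) = (\<Sum>j<n. Q j)"
  shows "KL n Q Q' \<ge> 0" and "KL n Q Q' = 0 \<Longrightarrow> \<forall>j<n. Q j = Q' j"
proof -
  \<comment> \<open>the summands of KL differ from these nonnegative terms only by Q' j - Q j, which sums to 0\<close>
  define g where "g j = Q j * ((Q' j / Q j - 1) - ln (Q' j / Q j))" for j
  have g_nonneg: "g j \<ge> 0" if "j < n" for j
  proof -
    have "ln (Q' j / Q j) \<le> Q' j / Q j - 1"
      using pos that by (intro ln_le_minus_one) auto
    then show ?thesis unfolding g_def using pos that by auto
  qed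
  have "(\<Sum>j<n. g j) = (\<Sum>j<n. Q' j - Q j + Q j * ln (Q j / Q' j))"
    using pos by (intro sum.cong) (auto simp: g_def ln_div field_simps)
  also have "\<dots> = KL n Q Q'"
    using sum_eq by (simp add: KL_def sum.distrib sum_subtractf)
  finally have KL_eq: "KL n Q Q' = (\<Sum>j<n. g j)" ..
  show "KL n Q Q' \<ge> 0" unfolding KL_eq by (rule sum_nonneg) (simp add: g_nonneg)
  show "\<forall>j<n. Q j = Q' j" if "KL n Q Q' = 0"
  proof (intro allI impI)
    fix j assume j: "j < n"
    have "g j = 0"
      using that j g_nonneg sum_nonneg_eq_0_iff[of "{..<n}" g] by (simp add: KL_eq)
    then have "ln (Q' j / Q j) = Q' j / Q j - 1"
      unfolding g_def using pos j by auto
    then have "Q' j / Q j = 1"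
      using pos j by (intro ln_eq_minus_one) auto
    then show "Q j = Q' j" using pos j by (simp add: field_simps)
  qed
qed

lemma KL_self [simp]: "KL n Q Q = 0"
  unfolding KL_def by (rule sum.neutral) simp

lemma out_dist_pos:
  assumes rows: "\<forall>i<m. \<forall>j<n. P i j > 0"
    and lam: "lam \<in> closed_simplex m" and j: "j < n"
  shows "out_dist m P lam j > 0"
proof -
  have nonneg: "\<forall>i<m. lam i \<ge> 0" and "(\<Sum>i<m. lam i) = 1"
    using lam by (auto simp: closed_simplex_def)
  then obtain i where i: "i < m" "lam i > 0"
    by (metis (no_types, lifting) lessThan_iff not_le sum_nonpos zero_less_one leD)
  show ?thesis unfolding out_dist_def
  proof (rule sum_pos2[of _ i])
    show "0 < lam i * P i j" using i rows j by simp
    show "0 \<le> lam k * P k j" if "k \<in> {..<m}" for k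
      using that nonneg rows j by (simp add: less_imp_le)
  qed (use i in auto)
qed

lemma sum_out_dist:
  assumes "\<forall>i<m. (\<Sum>j<n. P i j) = 1"
  shows "(\<Sum>j<n. out_dist m P lam j) = (\<Sum>i<m. lam i)"
proof -
  have "(\<Sum>j<n. out_dist m P lam j) = (\<Sum>i<m. lam i * (\<Sum>j<n. P i j))"
    unfolding out_dist_def sum_distrib_left by (rule sum.swap)
  also have "\<dots> = (\<Sum>i<m. lam i)"
    using assms by simp
  finally show ?thesis .
qed

lemma mutual_info_eq_sum_KL_minus_KL:
  assumes rows: "\<forall>i<m. \<forall>j<n. P i j > 0"
    and out_pos: "\<forall>j<n. out_dist m P lam j > 0"
    and Q_pos: "\<forall>j<n. Q j > 0"
  shows "mutual_info n m P lam
     = (\<Sum>i<m. lam i * KL n (P i) Q) - KL n (out_dist m P lam) Q"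
proof -
  define R where "R = out_dist m P lam"
  have "mutual_info n m P lam
      = (\<Sum>i<m. \<Sum>j<n. lam i * P i j * ln (P i j / Q j) - lam i * P i j * ln (R j / Q j))"
    unfolding mutual_info_def R_def[symmetric]
    using rows out_pos Q_pos
    by (intro sum.cong refl) (auto simp: R_def ln_div algebra_simps)
  also have "\<dots> = (\<Sum>i<m. lam i * KL n (P i) Q)
      - (\<Sum>j<n. \<Sum>i<m. lam i * P i j * ln (R j / Q j))"
  proof -
    have "(\<Sum>i<m. \<Sum>j<n. lam i * P i j * ln (R j / Q j))
        = (\<Sum>j<n. \<Sum>i<m. lam i * P i j * ln (R j / Q j))"
      by (rule sum.swap)
    then show ?thesis
      by (simp add: sum_subtractf KL_def sum_distrib_left mult.assoc)
  qed
  also have "(\<Sum>j<n. \<Sum>i<m. lam i * P i j * ln (R j / Q j)) = KL n R Q"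
    by (simp add: KL_def R_def out_dist_def sum_distrib_right)
  finally show ?thesis unfolding R_def .
qed

lemma equidistantD:
  assumes "equidistant n m P Q"
  shows "open_simplex n Q" and "i < m \<Longrightarrow> KL n (P i) Q = KL n (P 0) Q"
  using assms unfolding equidistant_def in_L_def by blast+

lemma mutual_info_eq_KL_equidistant_minus_KL:
  assumes rows: "\<forall>i<m. open_simplex n (P i)"
    and eq: "equidistant n m P Q0"
    and sum_lam: "(\<Sum>i<m. lam i) = 1"
    and out_pos: "\<forall>j<n. out_dist m P lam j > 0"
  shows "mutual_info n m P lam = KL n (P 0) Q0 - KL n (out_dist m P lam) Q0"
proof -
  have rows_pos: "\<forall>i<m. \<forall>j<n. P i j > 0"
    using rows by (simp add: open_simplex_def)
  have Q0_pos: "\<forall>j<n. Q0 j > 0"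
    using equidistantD(1)[OF eq] by (simp add: open_simplex_def)
  have "(\<Sum>i<m. lam i * KL n (P i) Q0) = (\<Sum>i<m. lam i * KL n (P 0) Q0)"
    by (intro sum.cong refl) (metis equidistantD(2)[OF eq] lessThan_iff)
  also have "\<dots> = KL n (P 0) Q0"
    using sum_lam by (simp add: sum_distrib_right[symmetric])
  finally show ?thesis
    using mutual_info_eq_sum_KL_minus_KL[OF rows_pos out_pos Q0_pos] by simp
qed

lemma mutual_info_le_KL_equidistant:
  assumes rows: "\<forall>i<m. open_simplex n (P i)"
    and eq: "equidistant n m P Q0"
    and lam: "lam \<in> closed_simplex m"
  shows "mutual_info n m P lam \<le> KL n (P 0) Q0"
    and "mutual_info n m P lam = KL n (P 0) Q0 \<Longrightarrow> \<forall>j<n. out_dist m P lam j = Q0 j"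
proof -
  have rows_pos: "\<forall>i<m. \<forall>j<n. P i j > 0"
    using rows by (simp add: open_simplex_def)
  have Q0_pos: "\<forall>j<n. Q0 j > 0" and Q0_sum: "(\<Sum>j<n. Q0 j) = 1"
    using equidistantD(1)[OF eq] by (simp_all add: open_simplex_def)
  have sum_lam: "(\<Sum>i<m. lam i) = 1"
    using lam by (simp add: closed_simplex_def)
  have out_pos: "\<forall>j<n. out_dist m P lam j > 0"
    using out_dist_pos[OF rows_pos lam] by blast
  have "(\<Sum>j<n. Q0 j) = (\<Sum>j<n. out_dist m P lam j)"
    using rows sum_lam Q0_sum by (simp add: sum_out_dist open_simplex_def)
  note Gibbs = Gibbs_inequality[OF out_pos Q0_pos this]
  note I_eq = mutual_info_eq_KL_equidistant_minus_KL[OF rows eq sum_lam out_pos]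
  show "mutual_info n m P lam \<le> KL n (P 0) Q0"
    using Gibbs(1) I_eq by linarith
  show "\<forall>j<n. out_dist m P lam j = Q0 j" if "mutual_info n m P lam = KL n (P 0) Q0"
    using I_eq that by (intro Gibbs(2)) simp
qed

lemma mutual_info_barycentric_equidistant:
  assumes rows: "\<forall>i<m. open_simplex n (P i)"
    and eq: "equidistant n m P Q0"
    and bary: "barycentric n m P Q0 lam0"
  shows "mutual_info n m P lam0 = KL n (P 0) Q0"
proof -
  have out_eq: "\<forall>j<n. out_dist m P lam0 j = Q0 j" and sum_lam0: "(\<Sum>i<m. lam0 i) = 1"
    using bary by (simp_all add: barycentric_def)
  have out_pos: "\<forall>j<n. out_dist m P lam0 j > 0"
    using out_eq equidistantD(1)[OF eq] by (simp add: open_simplex_def)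
  have "KL n (out_dist m P lam0) Q0 = KL n Q0 Q0"
    unfolding KL_def using out_eq by (intro sum.cong) simp_all
  then show ?thesis
    using mutual_info_eq_KL_equidistant_minus_KL[OF rows eq sum_lam0 out_pos] by simp
qed

theorem theorem17:
  fixes n :: nat and P :: "nat \<Rightarrow> nat \<Rightarrow> real"
    and Q0 lam0 :: "nat \<Rightarrow> real"
  assumes rows: "\<forall>i<4. open_simplex n (P i)"
    and gp: "general_position n 4 P"
    and eq: "equidistant n 4 P Q0"
    and bary: "barycentric n 4 P Q0 lam0"
    and nonneg: "\<forall>i<4. lam0 i \<ge> 0"
  shows "(\<exists>lam\<in>closed_simplex 4. mutual_info n 4 P lam = capacity n 4 P)
       \<and> (\<forall>lam\<in>closed_simplex 4. mutual_info n 4 P lam = capacity n 4 P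
             \<longrightarrow> (\<forall>j<n. out_dist 4 P lam j = Q0 j))
       \<and> capacity n 4 P = KL n (P 0) Q0"
proof -
  have lam0: "lam0 \<in> closed_simplex 4"
    using bary nonneg by (simp add: closed_simplex_def barycentric_def)
  note I_lam0 = mutual_info_barycentric_equidistant[OF rows eq bary]
  note I_le = mutual_info_le_KL_equidistant[OF rows eq]
  have capacity: "capacity n 4 P = KL n (P 0) Q0"
    unfolding capacity_def
  proof (rule cSup_eq_maximum)
    show "KL n (P 0) Q0 \<in> mutual_info n 4 P ` closed_simplex 4"
      using lam0 I_lam0 by (metis image_eqI)
    show "x \<le> KL n (P 0) Q0" if "x \<in> mutual_info n 4 P ` closed_simplex 4" for x
      using that I_le(1) by blast
  qed
  show ?thesis
    using lam0 I_lam0 I_le(2) unfolding capacity by blast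
qed

end
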